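(* Let $\{\mathcal S,\mathcal C,\mathcal R,\mathcal K(t)\}$ with $\mathcal S=\{S_1,\dots,S_N\}$ be a weakly reversible non-autonomous mass-action system with bounded kinetics whose network consists of a single linkage class. Let $P$ be a positive stoichiometric compatibility class, and suppose there is $\delta>0$ such that $\liminf_{t\to\infty}\phi_i(t,x_0)>\delta$ for all $i\in\{1,\dots,N\}$ and all $x_0\in P$. Then there exists $\rho>0$ such that for every $x_0\in P$ and every $i\in\{1,\dots,N\}$, $$\rho<\liminf_{t\to\infty}\phi_i(t,x_0)\le\limsup_{t\to\infty}\phi_i(t,x_0)<1/\rho.$$
   Context: A chemical reaction network on species $S_1,\dots,S_N$ consists of a finite set $\mathcal C\subset\mathbb Z^N_{\ge0}$ of complexes and a finite set $\mathcal R$ of reactions $y\to y'$ with $y,y'\in\mathcal C$, $y\ne y'$, such that every species has positive coefficient in some complex and every complex appears in some reaction; reactions are $y_k\to y_k'$. The reaction diagram is the directed graph on $\mathcal C$ with an edge for each reaction; its connected components are linkage classes; the network is weakly reversible if each linkage class is strongly connected. A non-autonomous mass-action system with bounded kinetics has functions $\kappa_k:[0,\infty)\to\mathbb R$ and $\eta>0$ with $\eta<\kappa_k(t)<1/\eta$ for all $t\ge0$, $k$, and dynamics $\dot x=\sum_k\kappa_k(t)x^{y_k}(y_k'-y_k)$, with $x^y=\prod_ix_i^{y_i}$. The stoichiometric subspace is $S=\mathrm{span}\{y_k'-y_k\}$, and a positive stoichiometric compatibility class is a set of the form $(x_0+S)\cap\mathbb R^N_{>0}$ with $x_0\in\mathbb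 R^N_{>0}$. $\phi(t,x_0)$ denotes the solution with initial condition $x_0$ and $\phi_i$ its $i$th component. *)

theory Defs
  imports "HOL-Analysis.Analysis" "HOL-Library.Extended_Real"
begin

text \<open>Species are indexed by a finite type 'n (so N = CARD('n)); complexes are
  vectors in nat^'n; a reaction y -> y' is a pair (y, y'); states are real^'n.\<close>

type_synonym 'n complex_vec = "nat ^ 'n"
type_synonym 'n reaction = "'n complex_vec \<times> 'n complex_vec"

definition cvec :: "nat ^ 'n \<Rightarrow> real ^ 'n" where
  "cvec y = (\<chi> i. real (y $ i))"

definition reaction_network :: "('n::finite) complex_vec set \<Rightarrow> 'n reaction set \<Rightarrow> bool" where
  "reaction_network C R \<longleftrightarrow> finite C \<and> finite R \<and> R \<subseteq> C \<times> C
     \<and> (\<forall>(y, y') \<in> R. y \<noteq> y')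
     \<and> (\<forall>i. \<exists>y\<in>C. y $ i > 0)
     \<and> (\<forall>y\<in>C. \<exists>(a, b)\<in>R. y = a \<or> y = b)"

definition same_linkage_class :: "'n reaction set \<Rightarrow> 'n complex_vec \<Rightarrow> 'n complex_vec \<Rightarrow> bool" where
  "same_linkage_class R y y' \<longleftrightarrow> (y, y') \<in> (R \<union> R\<inverse>)\<^sup>*"

definition single_linkage_class :: "'n complex_vec set \<Rightarrow> 'n reaction set \<Rightarrow> bool" where
  "single_linkage_class C R \<longleftrightarrow> (\<forall>y\<in>C. \<forall>y'\<in>C. same_linkage_class R y y')"

definition weakly_reversible :: "'n complex_vec set \<Rightarrow> 'n reaction set \<Rightarrow> bool" where
  "weakly_reversible C R \<longleftrightarrow>
     (\<forall>y\<in>C. \<forall>y'\<in>C. same_linkage_class R y y' \<longrightarrow> (y, y') \<in> R\<^sup>*)"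

definition bounded_kinetics :: "'n reaction set \<Rightarrow> ('n reaction \<Rightarrow> real \<Rightarrow> real) \<Rightarrow> real \<Rightarrow> bool" where
  "bounded_kinetics R \<kappa> \<eta> \<longleftrightarrow> \<eta> > 0 \<and>
     (\<forall>k\<in>R. \<forall>t\<ge>0. \<eta> < \<kappa> k t \<and> \<kappa> k t < 1 / \<eta>)"

definition monomial :: "real ^ ('n::finite) \<Rightarrow> nat ^ 'n \<Rightarrow> real" where
  "monomial x y = (\<Prod>i\<in>UNIV. (x $ i) ^ (y $ i))"

definition mass_action_field ::
  "('n::finite) reaction set \<Rightarrow> ('n reaction \<Rightarrow> real \<Rightarrow> real) \<Rightarrow> real \<Rightarrow> real ^ 'n \<Rightarrow> real ^ 'n" where
  "mass_action_field R \<kappa> t x =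
     (\<Sum>k\<in>R. (\<kappa> k t * monomial x (fst k)) *\<^sub>R (cvec (snd k) - cvec (fst k)))"

definition stoich_subspace :: "('n::finite) reaction set \<Rightarrow> (real ^ 'n) set" where
  "stoich_subspace R = span ((\<lambda>k. cvec (snd k) - cvec (fst k)) ` R)"

definition positive_compat_class :: "('n::finite) reaction set \<Rightarrow> (real ^ 'n) set \<Rightarrow> bool" where
  "positive_compat_class R P \<longleftrightarrow>
     (\<exists>x0. (\<forall>i. x0 $ i > 0) \<and>
        P = {x. x - x0 \<in> stoich_subspace R \<and> (\<forall>i. x $ i > 0)})"

text \<open>phi is a (Caratheodory / integral-form) solution on [0,\<infinity>) with phi 0 = x0.\<close>
definition is_solution ::
  "('n::finite) reaction set \<Rightarrow> ('n reaction \<Rightarrow> real \<Rightarrow> real) \<Rightarrow> real ^ 'n \<Rightarrow> (real \<Rightarrow> real ^ 'n) \<Rightarrow> bool" where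
  "is_solution R \<kappa> x0 \<phi> \<longleftrightarrow>
     (\<forall>t\<ge>0. ((\<lambda>s. mass_action_field R \<kappa> s (\<phi> s)) has_integral (\<phi> t - x0)) {0..t})"

end

theory Submission
  imports Defs
begin

(*
  Along a positive solution x(t) the entropy W(x) = \<Sum>_i x_i ln x_i - x_i changes at rate
  ln x \<bullet> f(t,x) = \<Sum>_k \<kappa>_k(t) e^{u(y_k)} (u(y_k') - u(y_k)),   where u(y) = y \<bullet> ln x.
  The reaction graph is strongly connected, so a large spread of the values u(y) over the
  complexes forces this sum below -e^{max u}: a pigeonhole argument finds a level that
  separates the complexes by a gap dominating all positive terms.  In a compatibility class,
  with all coordinates above \<delta>, such a spread is unavoidable far from the origin; there W
  decreases at a uniform rate c > 0.  Hence every trajectory that eventually stays above \<delta>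
  enters the sublevel set {W \<le> R0^2 + 1} and never leaves it, and x_i \<le> W(x) + e^2 + N
  turns this into a limsup bound that does not depend on the initial condition.
*)

(* Thresholds s_0 = 0, s_{j+1} = s_j + K e^{s_j}: among card C complexes some window
   [s_j, s_{j+1}) below the maximum of u contains no value of u. *)
fun gap_scale :: "real \<Rightarrow> nat \<Rightarrow> real" where
  "gap_scale K 0 = 0"
| "gap_scale K (Suc j) = gap_scale K j + K * exp (gap_scale K j)"

lemma gap_scale_nonneg: "K \<ge> 0 \<Longrightarrow> gap_scale K j \<ge> 0"
  by (induction j) auto

lemma gap_scale_mono: "K \<ge> 0 \<Longrightarrow> i \<le> j \<Longrightarrow> gap_scale K i \<le> gap_scale K j"
  by (rule lift_Suc_mono_le) auto

(* Pigeonhole: the card C disjoint windows cannot all contain one of the card C - 1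
   complexes other than the maximiser. *)
lemma empty_gap_exists:
  fixes C :: "'a set" and u :: "'a \<Rightarrow> real"
  assumes fin: "finite C" and ym: "ym \<in> C" and K: "K > 0" and max: "\<forall>y\<in>C. u y \<le> u ym"
  shows "\<exists>j < card C. \<forall>y\<in>C. \<not> (u ym - gap_scale K (Suc j) \<le> u y \<and> u y < u ym - gap_scale K j)"
proof (rule ccontr)
  assume "\<not> ?thesis"
  then have "\<forall>j\<in>{..<card C}. \<exists>y. y \<in> C \<and> u ym - gap_scale K (Suc j) \<le> u y
                                  \<and> u y < u ym - gap_scale K j"
    by auto
  then obtain f where f: "\<forall>j\<in>{..<card C}. f j \<in> C \<and> u ym - gap_scale K (Suc j) \<le> u (f j)
                                  \<and> u (f j) < u ym - gap_scale K j"
    by metis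
  have distinct: "f i \<noteq> f j" if "i < j" "j < card C" for i j
  proof -
    have "gap_scale K (Suc i) \<le> gap_scale K j" using gap_scale_mono[of K "Suc i" j] K that(1) by simp
    moreover have "u ym - gap_scale K (Suc i) \<le> u (f i)" "u (f j) < u ym - gap_scale K j"
      using f that by auto
    ultimately have "u (f j) < u (f i)" by linarith
    then show ?thesis by auto
  qed
  have "inj_on f {..<card C}"
  proof (rule inj_onI)
    fix i j assume "i \<in> {..<card C}" "j \<in> {..<card C}" "f i = f j"
    then show "i = j" using distinct[of i j] distinct[of j i] by (cases i j rule: linorder_cases) auto
  qed
  then have "card (f ` {..<card C}) = card C" by (simp add: card_image)
  moreover have "f ` {..<card C} \<subseteq> C - {ym}"
  proof (rule image_subsetI)
    fix j assume "j \<in> {..<card C}"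
    then have "f j \<in> C" "u (f j) < u ym - gap_scale K j" using f by auto
    then show "f j \<in> C - {ym}" using gap_scale_nonneg[of K j] K by auto
  qed
  then have "card (f ` {..<card C}) \<le> card (C - {ym})" using fin by (intro card_mono) auto
  moreover have "card C > 0" using ym fin by (auto simp: card_gt_0_iff)
  ultimately show False using ym fin by simp
qed

lemma separating_level:
  fixes C :: "'a set" and u :: "'a \<Rightarrow> real"
  assumes fin: "finite C" and ym: "ym \<in> C" and K: "K > 0" and max: "\<forall>y\<in>C. u y \<le> u ym"
    and y1: "y1 \<in> C" and spread: "u y1 < u ym - gap_scale K (card C)"
  shows "\<exists>a. a \<le> u ym \<and> u y1 < a \<and> (\<forall>y\<in>C. u y < a \<longrightarrow> K * exp (u ym - a) < a - u y)"
proof -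
  obtain j where j: "j < card C"
    and gap: "\<forall>y\<in>C. \<not> (u ym - gap_scale K (Suc j) \<le> u y \<and> u y < u ym - gap_scale K j)"
    using empty_gap_exists[OF fin ym K max] by blast
  define a where "a = u ym - gap_scale K j"
  have "gap_scale K (Suc j) \<le> gap_scale K (card C)"
    using gap_scale_mono[of K "Suc j" "card C"] K j by simp
  moreover have "K * exp (gap_scale K j) > 0" using K by simp
  ultimately have "u y1 < a" using spread unfolding a_def by simp
  moreover have "K * exp (u ym - a) < a - u y" if "y \<in> C" "u y < a" for y
  proof -
    have "\<not> u ym - gap_scale K (Suc j) \<le> u y" using gap that unfolding a_def by auto
    then show ?thesis unfolding a_def by simp
  qed
  moreover have "a \<le> u ym" using gap_scale_nonneg[of K j] K unfolding a_def by simp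
  ultimately show ?thesis by blast
qed

lemma rtrancl_crossing_edge:
  assumes "(x, y) \<in> r\<^sup>*" and "P x" and "\<not> P y"
  shows "\<exists>p q. (p, q) \<in> r \<and> P p \<and> \<not> P q"
  using assms by (induction rule: rtrancl_induct) auto

(* Each weighted term w e^p (q - p) with p, q \<le> m and 0 \<le> w \<le> W is at most W e^m,
   since t e^{-t} \<le> 1. *)
lemma weighted_increment_le:
  fixes p q m w W :: real
  assumes "p \<le> m" and "q \<le> m" and "0 \<le> w" and "w \<le> W"
  shows "w * exp p * (q - p) \<le> W * exp m"
proof -
  have "m - p \<le> exp (m - p)" using exp_ge_add_one_self[of "m - p"] by linarith
  then have "exp p * (q - p) \<le> exp p * exp (m - p)" using assms(2) by simp
  also have "\<dots> = exp m" by (simp flip: exp_add)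
  finally have "w * (exp p * (q - p)) \<le> w * exp m" using assms(3) by (rule mult_left_mono)
  also have "\<dots> \<le> W * exp m" using assms(4) by simp
  finally show ?thesis by (simp add: mult.assoc)
qed

lemma sum_le_by_one_negative_term:
  fixes g :: "'a \<Rightarrow> real"
  assumes finR: "finite R" and k0: "k0 \<in> R" and neg: "g k0 \<le> - L"
    and bound: "\<forall>k\<in>R. g k \<le> M" and M: "M \<ge> 0"
  shows "(\<Sum>k\<in>R. g k) \<le> - L + real (card R) * M"
proof -
  have "(\<Sum>k\<in>R - {k0}. g k) \<le> real (card (R - {k0})) * M"
    using bound by (intro sum_bounded_above) auto
  also have "\<dots> \<le> real (card R) * M"
    using finR M by (intro mult_right_mono of_nat_mono card_mono) auto
  finally show ?thesis using sum.remove[OF finR k0, of g] neg by linarith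
qed

(* The edge crossing the separating level contributes enough to dominate all other terms. *)
lemma strongly_connected_sum_negative:
  fixes C :: "'a set" and R :: "('a \<times> 'a) set" and u :: "'a \<Rightarrow> real" and w :: "'a \<times> 'a \<Rightarrow> real"
  assumes fin: "finite C" and finR: "finite R" and RC: "R \<subseteq> C \<times> C"
    and strong: "\<forall>y\<in>C. \<forall>y'\<in>C. (y, y') \<in> R\<^sup>*"
    and eta: "\<eta> > 0" and w: "\<forall>k\<in>R. \<eta> \<le> w k \<and> w k \<le> 1/\<eta>"
    and ym: "ym \<in> C" and max: "\<forall>y\<in>C. u y \<le> u ym"
    and y1: "y1 \<in> C" and spread: "u y1 < u ym - gap_scale ((real (card R) / \<eta> + 1) / \<eta>) (card C)"
  shows "(\<Sum>k\<in>R. w k * exp (u (fst k)) * (u (snd k) - u (fst k))) \<le> - exp (u ym)"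
proof -
  define K where "K = (real (card R) / \<eta> + 1) / \<eta>"
  have K: "K > 0" using eta unfolding K_def by (simp add: add_nonneg_pos)
  obtain a where a: "a \<le> u ym" "u y1 < a" and below: "\<forall>y\<in>C. u y < a \<longrightarrow> K * exp (u ym - a) < a - u y"
    using separating_level[OF fin ym K max y1] spread unfolding K_def by blast
  have "(ym, y1) \<in> R\<^sup>*" using strong ym y1 by blast
  then obtain p q where pq: "(p, q) \<in> R" "a \<le> u p" "u q < a"
    using rtrancl_crossing_edge[of ym y1 R "\<lambda>y. a \<le> u y"] a by auto
  define tm where "tm k = w k * exp (u (fst k)) * (u (snd k) - u (fst k))" for k
  have tm_le: "\<forall>k\<in>R. tm k \<le> (1 / \<eta>) * exp (u ym)"
  proof
    fix k assume "k \<in> R"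
    then have "fst k \<in> C" "snd k \<in> C" "\<eta> \<le> w k" "w k \<le> 1 / \<eta>" using RC w by auto
    then show "tm k \<le> (1 / \<eta>) * exp (u ym)"
      unfolding tm_def using max eta by (intro weighted_increment_le) auto
  qed
  have tm_pq: "tm (p, q) \<le> - ((real (card R) / \<eta> + 1) * exp (u ym))"
  proof -
    have "q \<in> C" using pq RC by auto
    then have "K * exp (u ym - a) < a - u q" using below pq by blast
    then have jump: "u q - u p < - (K * exp (u ym - a))" using pq by linarith
    moreover have "0 < K * exp (u ym - a)" using K by simp
    ultimately have "u q - u p \<le> 0" by linarith
    moreover have "\<eta> * exp a \<le> w (p, q) * exp (u p)" using w pq eta by (intro mult_mono) auto
    ultimately have "tm (p, q) \<le> (\<eta> * exp a) * (u q - u p)"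
      unfolding tm_def by (simp add: mult_right_mono_neg)
    also have "\<dots> \<le> (\<eta> * exp a) * (- (K * exp (u ym - a)))"
      using jump eta by (intro mult_left_mono) auto
    also have "\<dots> = - ((real (card R) / \<eta> + 1) * exp (u ym))"
      using eta unfolding K_def by (simp add: exp_diff field_simps)
    finally show ?thesis .
  qed
  have "(\<Sum>k\<in>R. tm k) \<le> - ((real (card R) / \<eta> + 1) * exp (u ym)) + real (card R) * ((1 / \<eta>) * exp (u ym))"
    using sum_le_by_one_negative_term[OF finR pq(1) tm_pq tm_le] eta by simp
  also have "\<dots> = - exp (u ym)" using eta by (simp add: field_simps)
  finally show ?thesis unfolding tm_def .
qed

(* On the span of finitely many vectors v_k, r \<mapsto> \<Sum>_k |v_k \<bullet> r| is a norm, hence equivalent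
   to the Euclidean norm (compactness of the unit sphere of the span). *)
lemma span_l1_norm_equivalence:
  fixes v :: "'k \<Rightarrow> 'a::euclidean_space" and I :: "'k set"
  assumes fin: "finite I"
  shows "\<exists>c0>0. \<forall>r\<in>span (v ` I). c0 * norm r \<le> (\<Sum>k\<in>I. \<bar>v k \<bullet> r\<bar>)"
proof -
  define T where "T = sphere 0 1 \<inter> span (v ` I)"
  define f where "f r = (\<Sum>k\<in>I. \<bar>v k \<bullet> r\<bar>)" for r
  have normalized_in_T: "(1 / norm r) *\<^sub>R r \<in> T" if "r \<in> span (v ` I)" "r \<noteq> 0" for r
    using that unfolding T_def by (simp add: span_mul)
  show ?thesis
  proof (cases "T = {}")
    case True
    then have "span (v ` I) \<subseteq> {0}" using normalized_in_T by blast
    then show ?thesis by (intro exI[of _ 1]) auto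
  next
    case False
    have "compact T" unfolding T_def by (intro compact_Int_closed) auto
    moreover have "continuous_on T f" unfolding f_def by (intro continuous_intros)
    ultimately obtain r0 where r0: "r0 \<in> T" and min: "\<forall>r\<in>T. f r0 \<le> f r"
      using continuous_attains_inf[OF _ False] by blast
    have pos: "f r0 > 0"
    proof (rule ccontr)
      assume "\<not> f r0 > 0"
      moreover have "f r0 \<ge> 0" unfolding f_def by (simp add: sum_nonneg)
      ultimately have "f r0 = 0" by simp
      then have "\<forall>k\<in>I. v k \<bullet> r0 = 0" unfolding f_def using fin
        by (subst (asm) sum_nonneg_eq_0_iff) auto
      then have "orthogonal r0 r0"
        using r0 unfolding T_def
        by (intro orthogonal_to_span[of r0 "v ` I" r0]) (auto simp: orthogonal_def inner_commute)
      then show False using r0 unfolding T_def by (simp add: orthogonal_def)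
    qed
    have "f r0 * norm r \<le> f r" if "r \<in> span (v ` I)" for r
    proof (cases "r = 0")
      case False
      have "f r0 \<le> f ((1 / norm r) *\<^sub>R r)" using min normalized_in_T that False by blast
      also have "\<dots> = f r / norm r" unfolding f_def by (simp add: abs_mult sum_divide_distrib)
      finally show ?thesis using False by (simp add: field_simps)
    qed (simp add: f_def)
    then show ?thesis using pos by (intro exI[of _ "f r0"]) (auto simp: f_def)
  qed
qed

lemma log_deviation_scalar_bounds:
  fixes d A b :: real
  assumes d: "d > 0" and A: "A \<ge> 0"
  shows "\<exists>\<beta> M. \<beta> \<ge> 0 \<and> M \<ge> 0 \<and> (\<forall>x\<ge>d. (x - b) * ln x - A * \<bar>x - b\<bar> \<ge> - \<beta>
            \<and> (x \<ge> M \<longrightarrow> (x - b) * ln x - A * \<bar>x - b\<bar> \<ge> x - b))"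
proof -
  define M where "M = max (max b 1) (exp (A + 1))"
  define \<beta> where "\<beta> = (M + \<bar>b\<bar>) * (\<bar>ln d\<bar> + \<bar>ln M\<bar> + A)"
  have M1: "M \<ge> 1" unfolding M_def by simp
  have \<beta>0: "\<beta> \<ge> 0" unfolding \<beta>_def using M1 A by simp
  have "(x - b) * ln x - A * \<bar>x - b\<bar> \<ge> - \<beta>
        \<and> (x \<ge> M \<longrightarrow> (x - b) * ln x - A * \<bar>x - b\<bar> \<ge> x - b)" if x: "x \<ge> d" for x
  proof (cases "x \<ge> M")
    case True
    have xb: "x - b \<ge> 0" and x0: "x > 0" using True M1 unfolding M_def by auto
    have "ln x \<ge> ln (exp (A + 1))" using True x0 unfolding M_def by (subst ln_le_cancel_iff) auto
    then have "ln x - A \<ge> 1" by simp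
    then have "(x - b) * (ln x - A) \<ge> (x - b) * 1" using xb by (intro mult_left_mono) auto
    moreover have "(x - b) * ln x - A * \<bar>x - b\<bar> = (x - b) * (ln x - A)"
      using xb by (simp add: algebra_simps)
    ultimately show ?thesis using xb \<beta>0 by simp
  next
    case False
    have x0: "x > 0" using x d by simp
    have "ln d \<le> ln x" "ln x \<le> ln M" using x d False x0 by auto
    then have lx: "\<bar>ln x\<bar> \<le> \<bar>ln d\<bar> + \<bar>ln M\<bar>" by linarith
    have xb: "\<bar>x - b\<bar> \<le> M + \<bar>b\<bar>" using False x0 by linarith
    have "\<bar>(x - b) * ln x\<bar> \<le> (M + \<bar>b\<bar>) * (\<bar>ln d\<bar> + \<bar>ln M\<bar>)"
      unfolding abs_mult using lx xb by (intro mult_mono) auto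
    moreover have "A * \<bar>x - b\<bar> \<le> (M + \<bar>b\<bar>) * A" using xb A by (simp add: mult.commute mult_left_mono)
    ultimately have "(x - b) * ln x - A * \<bar>x - b\<bar> \<ge> - \<beta>"
      unfolding \<beta>_def by (simp add: algebra_simps) linarith
    then show ?thesis using False by simp
  qed
  then show ?thesis using \<beta>0 M1 by (intro exI[of _ \<beta>] exI[of _ M]) auto
qed

lemma log_deviation_sublevel_bounded:
  fixes b :: "real ^ 'n::finite" and d A :: real
  assumes d: "d > 0" and A: "A \<ge> 0"
  shows "\<exists>X. \<forall>x. (\<forall>i. x $ i \<ge> d)
           \<and> (\<Sum>i\<in>UNIV. (x $ i - b $ i) * ln (x $ i)) \<le> A * (\<Sum>i\<in>UNIV. \<bar>x $ i - b $ i\<bar>)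
           \<longrightarrow> (\<forall>i. x $ i \<le> X)"
proof -
  have "\<forall>i. \<exists>\<beta> M. \<beta> \<ge> 0 \<and> M \<ge> 0 \<and> (\<forall>x\<ge>d. (x - b $ i) * ln x - A * \<bar>x - b $ i\<bar> \<ge> - \<beta>
                     \<and> (x \<ge> M \<longrightarrow> (x - b $ i) * ln x - A * \<bar>x - b $ i\<bar> \<ge> x - b $ i))"
    using log_deviation_scalar_bounds[OF d A] by blast
  then obtain \<beta> M where bounds: "\<And>i. \<beta> i \<ge> 0 \<and> M i \<ge> 0 \<and> (\<forall>x\<ge>d. (x - b $ i) * ln x - A * \<bar>x - b $ i\<bar> \<ge> - \<beta> i
                     \<and> (x \<ge> M i \<longrightarrow> (x - b $ i) * ln x - A * \<bar>x - b $ i\<bar> \<ge> x - b $ i))"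
    by metis
  define \<beta>s where "\<beta>s = (\<Sum>i\<in>UNIV. \<beta> i)"
  define X where "X = (\<Sum>i\<in>UNIV. M i) + (\<Sum>i\<in>UNIV. \<bar>b $ i\<bar>) + \<beta>s + 1"
  have "x $ i \<le> X"
    if xd: "\<forall>i. x $ i \<ge> d"
      and ineq: "(\<Sum>i\<in>UNIV. (x $ i - b $ i) * ln (x $ i)) \<le> A * (\<Sum>i\<in>UNIV. \<bar>x $ i - b $ i\<bar>)" for x i
  proof (rule ccontr)
    assume "\<not> x $ i \<le> X"
    define h where "h j = (x $ j - b $ j) * ln (x $ j) - A * \<bar>x $ j - b $ j\<bar>" for j
    have sum_h: "(\<Sum>j\<in>UNIV. h j) \<le> 0" using ineq unfolding h_def
      by (simp add: sum_subtractf sum_distrib_left)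
    have "M i \<le> (\<Sum>j\<in>UNIV. M j)" using bounds by (intro member_le_sum) auto
    moreover have "\<bar>b $ i\<bar> \<le> (\<Sum>j\<in>UNIV. \<bar>b $ j\<bar>)" by (intro member_le_sum) auto
    moreover have \<beta>s0: "\<beta>s \<ge> 0" unfolding \<beta>s_def using bounds by (intro sum_nonneg) auto
    ultimately have "x $ i \<ge> M i" and big: "x $ i - b $ i > \<beta>s"
      using \<open>\<not> x $ i \<le> X\<close> bounds[of i] unfolding X_def by auto
    then have hi: "h i \<ge> x $ i - b $ i" using bounds[of i] xd unfolding h_def by blast
    have "(\<Sum>j\<in>UNIV - {i}. - \<beta> j) \<le> (\<Sum>j\<in>UNIV - {i}. h j)"
      using bounds xd unfolding h_def by (intro sum_mono) blast
    moreover have "(\<Sum>j\<in>UNIV - {i}. \<beta> j) \<le> \<beta>s"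
      unfolding \<beta>s_def using bounds by (intro sum_mono2) auto
    moreover have "(\<Sum>j\<in>UNIV. h j) = h i + (\<Sum>j\<in>UNIV - {i}. h j)" by (simp add: sum.remove)
    ultimately show False using sum_h hi big by (simp add: sum_negf)
  qed
  then show ?thesis by blast
qed

definition log_vec :: "real ^ 'n::finite \<Rightarrow> real ^ 'n" where
  "log_vec x = (\<chi> i. ln (x $ i))"

definition entropy :: "real ^ 'n::finite \<Rightarrow> real" where
  "entropy x = (\<Sum>i\<in>UNIV. x $ i * ln (x $ i) - x $ i)"

lemma entropy_scalar_convexity:
  fixes x z :: real
  assumes "x > 0" "z > 0"
  shows "(z * ln z - z) - (x * ln x - x) \<le> ln z * (z - x)"
proof -
  have "ln (z / x) \<le> z / x - 1" using assms by (intro ln_le_minus_one) auto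
  then have "x * ln (z / x) \<le> x * (z / x - 1)" using assms by (intro mult_left_mono) auto
  moreover have "x * (z / x - 1) = z - x" using assms by (simp add: field_simps)
  moreover have "ln (z / x) = ln z - ln x" using assms by (simp add: ln_div)
  ultimately have "x * (ln z - ln x) \<le> z - x" by simp
  then show ?thesis by (simp add: algebra_simps)
qed

lemma entropy_diff_le:
  assumes "\<forall>i. x $ i > 0" "\<forall>i. z $ i > 0"
  shows "entropy z - entropy x \<le> log_vec z \<bullet> (z - x)"
proof -
  have "entropy z - entropy x = (\<Sum>i\<in>UNIV. (z $ i * ln (z $ i) - z $ i) - (x $ i * ln (x $ i) - x $ i))"
    unfolding entropy_def by (simp add: sum_subtractf)
  also have "\<dots> \<le> (\<Sum>i\<in>UNIV. ln (z $ i) * (z $ i - x $ i))"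
    using assms entropy_scalar_convexity by (intro sum_mono) auto
  also have "\<dots> = log_vec z \<bullet> (z - x)" unfolding log_vec_def inner_vec_def by simp
  finally show ?thesis .
qed

lemma xlnx_minus_x_ge: "x > 0 \<Longrightarrow> x * ln x - x \<ge> - (1::real)"
  using entropy_scalar_convexity[of x 1] by simp

lemma xlnx_minus_x_ge_linear: "x > 0 \<Longrightarrow> x * ln x - x \<ge> x - exp (2::real)"
  using entropy_scalar_convexity[of x "exp 2"] by (simp add: algebra_simps)

lemma entropy_ge: "\<forall>j. x $ j > 0 \<Longrightarrow> entropy x \<ge> - real CARD('n)" for x :: "real ^ 'n::finite"
proof -
  assume "\<forall>j. x $ j > 0"
  then have "(\<Sum>j\<in>(UNIV::'n set). - 1) \<le> entropy x"
    unfolding entropy_def using xlnx_minus_x_ge by (intro sum_mono) auto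
  then show ?thesis by simp
qed

lemma coordinate_le_entropy:
  fixes x :: "real ^ 'n::finite"
  assumes x: "\<forall>j. x $ j > 0"
  shows "x $ i \<le> entropy x + exp 2 + real CARD('n)"
proof -
  have "x $ i * ln (x $ i) - x $ i + 1 \<le> (\<Sum>j\<in>UNIV. x $ j * ln (x $ j) - x $ j + 1)"
  proof (intro member_le_sum)
    fix j show "0 \<le> x $ j * ln (x $ j) - x $ j + 1"
      using xlnx_minus_x_ge[of "x $ j"] x[rule_format, of j] by linarith
  qed auto
  also have "\<dots> = entropy x + real CARD('n)" unfolding entropy_def by (simp add: sum.distrib)
  finally show ?thesis using xlnx_minus_x_ge_linear[of "x $ i"] x[rule_format, of i] by linarith
qed

lemma entropy_le_norm_sq:
  fixes x :: "real ^ 'n::finite"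
  assumes x: "\<forall>j. x $ j > 0"
  shows "entropy x \<le> norm x ^ 2"
proof -
  have "x $ j * ln (x $ j) - x $ j \<le> x $ j * x $ j" for j
  proof -
    have "x $ j * ln (x $ j) \<le> x $ j * (x $ j - 1)"
      using x ln_le_minus_one[of "x $ j"] by (intro mult_left_mono) (auto simp: less_imp_le)
    then show ?thesis using x[rule_format, of j] by (simp add: algebra_simps)
  qed
  then have "entropy x \<le> (\<Sum>j\<in>UNIV. x $ j * x $ j)" unfolding entropy_def by (intro sum_mono) auto
  also have "\<dots> = norm x ^ 2" by (simp add: power2_norm_eq_inner inner_vec_def)
  finally show ?thesis .
qed

lemma entropy_continuous_on:
  assumes "continuous_on S \<phi>" "\<forall>s\<in>S. \<forall>i. (\<phi> s :: real ^ 'n::finite) $ i > 0"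
  shows "continuous_on S (\<lambda>s. entropy (\<phi> s))"
proof -
  have "\<forall>s\<in>S. \<phi> s $ i \<noteq> 0" for i using assms(2) by (metis less_irrefl)
  then show ?thesis unfolding entropy_def by (intro continuous_intros assms(1))
qed

lemma log_vec_continuous_on:
  assumes "continuous_on S \<phi>" "\<forall>s\<in>S. \<forall>i. (\<phi> s :: real ^ 'n::finite) $ i > 0"
  shows "continuous_on S (\<lambda>s. log_vec (\<phi> s))"
proof -
  have "\<forall>s\<in>S. \<phi> s $ i \<noteq> 0" for i using assms(2) by (metis less_irrefl)
  then show ?thesis unfolding log_vec_def by (intro continuous_intros assms(1))
qed

lemma local_increment_bound_globalizes:
  fixes g :: "real \<Rightarrow> real"
  assumes le: "t0 \<le> t1" and d: "d > 0"
    and local: "\<And>a b. t0 \<le> a \<Longrightarrow> a \<le> b \<Longrightarrow> b \<le> t1 \<Longrightarrow> b - a < d \<Longrightarrow> g b - g a \<le> L * (b - a)"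
  shows "g t1 - g t0 \<le> L * (t1 - t0)"
proof -
  define n :: nat where "n = Suc (nat \<lceil>(t1 - t0) / d\<rceil>)"
  define h where "h = (t1 - t0) / real n"
  define tt where "tt j = t0 + real j * h" for j :: nat
  have n0: "n > 0" unfolding n_def by simp
  have "(t1 - t0) / d < real n" unfolding n_def by linarith
  then have h_small: "h < d" using d n0 unfolding h_def by (simp add: field_simps)
  have h0: "h \<ge> 0" using le unfolding h_def by simp
  have tt_end: "tt n = t1" using n0 unfolding tt_def h_def by simp
  have tt_in: "t0 \<le> tt j \<and> tt j \<le> t1" if "j \<le> n" for j
  proof -
    have "real j * h \<le> real n * h" using that h0 by (intro mult_right_mono) auto
    then show ?thesis using h0 tt_end unfolding tt_def by auto
  qed
  have step: "g (tt (Suc j)) - g (tt j) \<le> L * h" if "j < n" for j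
  proof -
    have "tt (Suc j) - tt j = h" unfolding tt_def by (simp add: algebra_simps)
    moreover have "tt j \<le> tt (Suc j)" using h0 unfolding tt_def by (simp add: algebra_simps)
    ultimately show ?thesis
      using local[of "tt j" "tt (Suc j)"] tt_in[of j] tt_in[of "Suc j"] that h_small by simp
  qed
  have "g t1 - g t0 = (\<Sum>j<n. g (tt (Suc j)) - g (tt j))"
    using sum_lessThan_telescope[of "\<lambda>j. g (tt j)" n] tt_end unfolding tt_def by simp
  also have "\<dots> \<le> (\<Sum>j<n. L * h)" using step by (intro sum_mono) auto
  also have "\<dots> = L * (t1 - t0)" using n0 unfolding h_def by simp
  finally show ?thesis .
qed

lemma entropy_increment_le_integral_bound:
  fixes f :: "real \<Rightarrow> real ^ 'n::finite"
  assumes ab: "a \<le> b" and x: "\<forall>i. x $ i > 0" and z: "\<forall>i. z $ i > 0"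
    and integral: "(f has_integral (z - x)) {a..b}"
    and bound: "\<forall>s\<in>{a..b}. log_vec z \<bullet> f s \<le> L"
  shows "entropy z - entropy x \<le> L * (b - a)"
proof -
  have lhs: "((\<lambda>s. log_vec z \<bullet> f s) has_integral (log_vec z \<bullet> (z - x))) {a..b}"
    using has_integral_linear[OF integral bounded_linear_inner_right] by (simp add: o_def)
  have rhs: "((\<lambda>s. L) has_integral (L * (b - a))) {a..b}"
    using has_integral_const_real[of L a b] ab by (simp add: mult.commute)
  have "log_vec z \<bullet> (z - x) \<le> L * (b - a)"
    using has_integral_le[OF lhs rhs] bound by blast
  then show ?thesis using entropy_diff_le[OF x z] by linarith
qed

(* Freezing log_vec costs an arbitrarily small error by uniform continuity. *)
lemma entropy_decrease:
  fixes \<phi> f :: "real \<Rightarrow> real ^ 'n::finite"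
  assumes le: "t0 \<le> t1"
    and pos: "\<forall>s\<in>{t0..t1}. \<forall>i. \<phi> s $ i > 0"
    and cont: "continuous_on {t0..t1} \<phi>"
    and integral: "\<And>a b. t0 \<le> a \<Longrightarrow> a \<le> b \<Longrightarrow> b \<le> t1 \<Longrightarrow> (f has_integral (\<phi> b - \<phi> a)) {a..b}"
    and bounded: "\<forall>s\<in>{t0..t1}. norm (f s) \<le> Mf"
    and rate: "\<forall>s\<in>{t0..t1}. log_vec (\<phi> s) \<bullet> f s \<le> Bd"
  shows "entropy (\<phi> t1) - entropy (\<phi> t0) \<le> Bd * (t1 - t0)"
proof (cases "t0 = t1")
  case False
  then have lt: "t1 - t0 > 0" using le by simp
  have Mf0: "Mf \<ge> 0" using bounded le by (meson atLeastAtMost_iff norm_ge_zero order.trans order_refl)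
  have "uniformly_continuous_on {t0..t1} (\<lambda>s. log_vec (\<phi> s))"
    using compact_uniformly_continuous[OF log_vec_continuous_on[OF cont pos]] by simp
  show ?thesis
  proof (rule field_le_epsilon)
    fix e :: real assume e: "e > 0"
    define e' where "e' = e / (t1 - t0)"
    have e': "e' > 0" using e lt unfolding e'_def by simp
    then obtain d where d: "d > 0" and close: "\<forall>s\<in>{t0..t1}. \<forall>s'\<in>{t0..t1}. dist s' s < d
                  \<longrightarrow> dist (log_vec (\<phi> s')) (log_vec (\<phi> s)) < e' / (Mf + 1)"
      using \<open>uniformly_continuous_on _ _\<close> Mf0 unfolding uniformly_continuous_on_def
      by (metis add_nonneg_pos divide_pos_pos zero_less_one)
    have pointwise: "log_vec (\<phi> b) \<bullet> f s \<le> Bd + e'"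
      if "s \<in> {t0..t1}" "b \<in> {t0..t1}" "dist b s < d" for s b
    proof -
      have small: "norm (log_vec (\<phi> b) - log_vec (\<phi> s)) \<le> e' / (Mf + 1)"
        using close that by (auto simp: dist_norm less_imp_le)
      have "log_vec (\<phi> b) \<bullet> f s = log_vec (\<phi> s) \<bullet> f s + (log_vec (\<phi> b) - log_vec (\<phi> s)) \<bullet> f s"
        by (simp add: inner_diff_left)
      also have "\<dots> \<le> Bd + norm (log_vec (\<phi> b) - log_vec (\<phi> s)) * norm (f s)"
        using rate that norm_cauchy_schwarz by (intro add_mono) auto
      also have "\<dots> \<le> Bd + e' / (Mf + 1) * Mf"
        using small bounded that e' Mf0 by (intro add_left_mono mult_mono) auto
      also have "\<dots> \<le> Bd + e'"
        using e' Mf0 by (simp add: field_simps)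
      finally show ?thesis .
    qed
    have "entropy (\<phi> t1) - entropy (\<phi> t0) \<le> (Bd + e') * (t1 - t0)"
    proof (rule local_increment_bound_globalizes[OF le d])
      fix a b assume ab: "t0 \<le> a" "a \<le> b" "b \<le> t1" "b - a < d"
      show "entropy (\<phi> b) - entropy (\<phi> a) \<le> (Bd + e') * (b - a)"
      proof (rule entropy_increment_le_integral_bound[OF \<open>a \<le> b\<close> _ _ integral[OF ab(1-3)]])
        show "\<forall>i. \<phi> a $ i > 0" "\<forall>i. \<phi> b $ i > 0" using pos ab by auto
        show "\<forall>s\<in>{a..b}. log_vec (\<phi> b) \<bullet> f s \<le> Bd + e'"
          using pointwise ab by (auto simp: dist_real_def)
      qed
    qed
    moreover have "(Bd + e') * (t1 - t0) = Bd * (t1 - t0) + e"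
      using lt unfolding e'_def by (simp add: distrib_right)
    ultimately show "entropy (\<phi> t1) - entropy (\<phi> t0) \<le> Bd * (t1 - t0) + e" by simp
  qed
qed simp

definition reaction_vec :: "('n::finite) reaction \<Rightarrow> real ^ 'n" where
  "reaction_vec k = cvec (snd k) - cvec (fst k)"

definition log_monomial :: "real ^ 'n::finite \<Rightarrow> nat ^ 'n \<Rightarrow> real" where
  "log_monomial x y = cvec y \<bullet> log_vec x"

lemma stoich_subspace_reaction_vec: "stoich_subspace R = span (reaction_vec ` R)"
  unfolding stoich_subspace_def reaction_vec_def by simp

lemma monomial_eq_exp_log_monomial:
  assumes "\<forall>i. x $ i > 0"
  shows "monomial x y = exp (log_monomial x y)"
proof -
  have "monomial x y = (\<Prod>i\<in>UNIV. exp (real (y $ i) * ln (x $ i)))"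
    unfolding monomial_def using assms by (intro prod.cong refl) (simp add: exp_of_nat_mult)
  also have "\<dots> = exp (log_monomial x y)"
    unfolding log_monomial_def cvec_def log_vec_def inner_vec_def by (simp add: exp_sum)
  finally show ?thesis .
qed

lemma reaction_vec_inner_log_vec:
  "reaction_vec k \<bullet> log_vec x = log_monomial x (snd k) - log_monomial x (fst k)"
  unfolding reaction_vec_def log_monomial_def by (simp add: inner_diff_left)

lemma inner_mass_action_field:
  "z \<bullet> mass_action_field R \<kappa> t x = (\<Sum>k\<in>R. \<kappa> k t * monomial x (fst k) * (reaction_vec k \<bullet> z))"
  unfolding mass_action_field_def reaction_vec_def by (simp add: inner_sum_right inner_commute)

lemma mass_action_field_in_stoich_subspace: "mass_action_field R \<kappa> t x \<in> stoich_subspace R"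
  unfolding mass_action_field_def stoich_subspace_def
  by (intro span_sum span_mul span_base) auto

lemma solution_has_integral:
  assumes sol: "is_solution R \<kappa> x0 \<phi>" and a: "0 \<le> a" and ab: "a \<le> b"
  shows "((\<lambda>s. mass_action_field R \<kappa> s (\<phi> s)) has_integral (\<phi> b - \<phi> a)) {a..b}"
proof -
  define f where "f = (\<lambda>s. mass_action_field R \<kappa> s (\<phi> s))"
  have Ib: "(f has_integral (\<phi> b - x0)) {0..b}" and Ia: "(f has_integral (\<phi> a - x0)) {0..a}"
    using sol a ab unfolding is_solution_def f_def by auto
  then have int_0b: "f integrable_on {0..b}" by blast
  then have "f integrable_on {a..b}" using integrable_subinterval_real a by fastforce
  moreover have "integral {0..a} f + integral {a..b} f = integral {0..b} f"
    using Henstock_Kurzweil_Integration.integral_combine[OF a ab int_0b] .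
  then have "integral {a..b} f = \<phi> b - \<phi> a"
    using integral_unique[OF Ia] integral_unique[OF Ib] by (simp add: algebra_simps)
  ultimately show ?thesis unfolding f_def by (metis has_integral_integral)
qed

lemma solution_continuous_on:
  assumes sol: "is_solution R \<kappa> x0 \<phi>" and a: "0 \<le> a"
  shows "continuous_on {a..b} \<phi>"
proof (cases "a \<le> b")
  case True
  define f where "f s = mass_action_field R \<kappa> s (\<phi> s)" for s
  have "(f has_integral (\<phi> b - x0)) {0..b}" using sol a True unfolding is_solution_def f_def by simp
  then have "f integrable_on {0..b}" by blast
  then have cont: "continuous_on {0..b} (\<lambda>t. x0 + integral {0..t} f)"
    by (intro continuous_intros indefinite_integral_continuous_1)
  have eq: "\<phi> t = x0 + integral {0..t} f" if "t \<in> {0..b}" for t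
  proof -
    have "(f has_integral (\<phi> t - x0)) {0..t}" using sol that unfolding is_solution_def f_def by auto
    then show ?thesis by (simp add: integral_unique)
  qed
  from cont have "continuous_on {0..b} \<phi>" by (rule continuous_on_eq) (simp add: eq)
  then show ?thesis by (rule continuous_on_subset) (use a in auto)
qed simp

lemma solution_stays_in_compat_class:
  assumes sol: "is_solution R \<kappa> x0 \<phi>" and t: "0 \<le> t"
  shows "\<phi> t - x0 \<in> stoich_subspace R"
proof -
  define f where "f s = mass_action_field R \<kappa> s (\<phi> s)" for s
  obtain r z where r: "r \<in> stoich_subspace R" and z: "\<And>w. w \<in> stoich_subspace R \<Longrightarrow> orthogonal z w"
    and rz: "\<phi> t - x0 = r + z"
    using orthogonal_subspace_decomp_exists[of "reaction_vec ` R" "\<phi> t - x0"]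
    unfolding stoich_subspace_reaction_vec by blast
  have "(f has_integral (\<phi> t - x0)) {0..t}" using sol t unfolding is_solution_def f_def by auto
  then have "((inner z \<circ> f) has_integral (z \<bullet> (\<phi> t - x0))) {0..t}"
    by (rule has_integral_linear[OF _ bounded_linear_inner_right])
  moreover have "inner z \<circ> f = (\<lambda>s. 0)"
    using z mass_action_field_in_stoich_subspace unfolding f_def orthogonal_def by fastforce
  ultimately have "z \<bullet> (\<phi> t - x0) = 0" by simp
  moreover have "z \<bullet> r = 0" using z r by (simp add: orthogonal_def)
  ultimately have "z = 0" using rz by (simp add: inner_add_right)
  then show ?thesis using rz r by simp
qed

lemma solution_stays_in_class_of:
  assumes sol: "is_solution R \<kappa> x0 \<phi>" and x0: "x0 - b \<in> stoich_subspace R" and t: "0 \<le> t"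
  shows "\<phi> t - b \<in> stoich_subspace R"
proof -
  have "(\<phi> t - x0) + (x0 - b) \<in> stoich_subspace R"
    using solution_stays_in_compat_class[OF sol t] x0 unfolding stoich_subspace_def by (rule span_add)
  then show ?thesis by simp
qed

lemma mass_action_field_bounded:
  fixes \<phi> :: "real \<Rightarrow> real ^ 'n::finite"
  assumes cont: "continuous_on {a..b} \<phi>" and ab: "a \<le> b" and a: "0 \<le> a"
    and finR: "finite R" and kin: "bounded_kinetics R \<kappa> \<eta>"
  shows "\<exists>Mf. \<forall>s\<in>{a..b}. norm (mass_action_field R \<kappa> s (\<phi> s)) \<le> Mf"
proof -
  define g where "g s = (\<Sum>k\<in>R. (1 / \<eta>) * \<bar>monomial (\<phi> s) (fst k)\<bar> * norm (reaction_vec k))" for s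
  have "continuous_on {a..b} (\<lambda>s. monomial (\<phi> s) y)" for y
    unfolding monomial_def by (intro continuous_intros cont)
  then have "continuous_on {a..b} g" unfolding g_def by (intro continuous_intros)
  then obtain s0 where max: "\<forall>s\<in>{a..b}. g s \<le> g s0"
    using continuous_attains_sup[OF compact_Icc] ab by (metis atLeastatMost_empty_iff)
  have "norm (mass_action_field R \<kappa> s (\<phi> s)) \<le> g s" if s: "s \<in> {a..b}" for s
  proof -
    have "norm (mass_action_field R \<kappa> s (\<phi> s))
          \<le> (\<Sum>k\<in>R. norm ((\<kappa> k s * monomial (\<phi> s) (fst k)) *\<^sub>R reaction_vec k))"
      unfolding mass_action_field_def reaction_vec_def by (rule norm_sum)
    also have "\<dots> \<le> g s" unfolding g_def
    proof (intro sum_mono)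
      fix k assume "k \<in> R"
      then have "\<eta> < \<kappa> k s" "\<kappa> k s < 1 / \<eta>" "\<eta> > 0"
        using kin s a unfolding bounded_kinetics_def by auto
      then have "\<bar>\<kappa> k s\<bar> \<le> 1 / \<eta>" by linarith
      then have "\<bar>\<kappa> k s\<bar> * (\<bar>monomial (\<phi> s) (fst k)\<bar> * norm (reaction_vec k))
                 \<le> (1 / \<eta>) * (\<bar>monomial (\<phi> s) (fst k)\<bar> * norm (reaction_vec k))"
        by (intro mult_right_mono) auto
      then show "norm ((\<kappa> k s * monomial (\<phi> s) (fst k)) *\<^sub>R reaction_vec k)
                 \<le> (1 / \<eta>) * \<bar>monomial (\<phi> s) (fst k)\<bar> * norm (reaction_vec k)"
        by (simp add: abs_mult mult.assoc)
    qed
    finally show ?thesis .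
  qed
  then have "\<forall>s\<in>{a..b}. norm (mass_action_field R \<kappa> s (\<phi> s)) \<le> g s0"
    using max by (meson order_trans)
  then show ?thesis by blast
qed

lemma large_affinity_forces_dissipation:
  fixes x :: "real ^ 'n::finite"
  assumes net: "reaction_network C R"
    and strong: "\<forall>y\<in>C. \<forall>y'\<in>C. (y, y') \<in> R\<^sup>*"
    and kin: "bounded_kinetics R \<kappa> \<eta>" and t: "t \<ge> 0"
    and xpos: "\<forall>i. x $ i > 0"
    and k: "k \<in> R"
    and spread: "\<bar>reaction_vec k \<bullet> log_vec x\<bar> > gap_scale ((real (card R) / \<eta> + 1) / \<eta>) (card C)"
  shows "log_vec x \<bullet> mass_action_field R \<kappa> t x \<le> - exp (Max (log_monomial x ` C))"
proof -
  have fin: "finite C" and finR: "finite R" and RC: "R \<subseteq> C \<times> C"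
    using net unfolding reaction_network_def by auto
  have eta: "\<eta> > 0" and w: "\<forall>k\<in>R. \<eta> \<le> \<kappa> k t \<and> \<kappa> k t \<le> 1 / \<eta>"
    using kin t unfolding bounded_kinetics_def by (auto simp: less_imp_le)
  define u where "u = log_monomial x"
  have kC: "fst k \<in> C" "snd k \<in> C" using k RC by auto
  obtain y1 y2 where y1: "y1 \<in> C" and y2: "y2 \<in> C"
    and y12: "u y2 - u y1 > gap_scale ((real (card R) / \<eta> + 1) / \<eta>) (card C)"
    using kC spread reaction_vec_inner_log_vec[of k x] unfolding u_def
    by (cases "reaction_vec k \<bullet> log_vec x \<ge> 0") auto
  have "Max (u ` C) \<in> u ` C" using fin y1 by (intro Max_in) auto
  then obtain ym where ym: "ym \<in> C" and ym_max: "u ym = Max (u ` C)" by auto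
  have max: "\<forall>y\<in>C. u y \<le> u ym" using ym_max fin by auto
  have "(\<Sum>k\<in>R. \<kappa> k t * exp (u (fst k)) * (u (snd k) - u (fst k))) \<le> - exp (u ym)"
    using strongly_connected_sum_negative[OF fin finR RC strong eta w ym max y1] y12 max y2 by fastforce
  moreover have "log_vec x \<bullet> mass_action_field R \<kappa> t x
                 = (\<Sum>k\<in>R. \<kappa> k t * exp (u (fst k)) * (u (snd k) - u (fst k)))"
    unfolding inner_mass_action_field u_def using xpos
    by (intro sum.cong refl) (simp add: monomial_eq_exp_log_monomial reaction_vec_inner_log_vec)
  ultimately show ?thesis using ym_max unfolding u_def by simp
qed

(* If all affinities |(y' - y) \<bullet> ln x| are at most B, the projection of ln x onto the stoichiometric
   subspace is small, which bounds (x - b) \<bullet> ln x for x in the class of b. *)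
lemma log_deviation_bounded_by_affinities:
  fixes x b :: "real ^ 'n::finite"
  assumes c0: "c0 > 0"
    and equiv: "\<forall>r\<in>stoich_subspace R. c0 * norm r \<le> (\<Sum>k\<in>R. \<bar>reaction_vec k \<bullet> r\<bar>)"
    and xS: "x - b \<in> stoich_subspace R"
    and small: "\<forall>k\<in>R. \<bar>reaction_vec k \<bullet> log_vec x\<bar> \<le> B"
  shows "(\<Sum>i\<in>UNIV. (x $ i - b $ i) * ln (x $ i))
           \<le> (real (card R) * B / c0) * (\<Sum>i\<in>UNIV. \<bar>x $ i - b $ i\<bar>)"
proof -
  obtain r z where r: "r \<in> stoich_subspace R" and z: "\<And>w. w \<in> stoich_subspace R \<Longrightarrow> orthogonal z w"
    and rz: "log_vec x = r + z"
    using orthogonal_subspace_decomp_exists[of "reaction_vec ` R" "log_vec x"]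
    unfolding stoich_subspace_reaction_vec by blast
  have z_perp: "w \<bullet> z = 0" if "w \<in> stoich_subspace R" for w
    using z[OF that] by (simp add: orthogonal_def inner_commute)
  have "reaction_vec k \<in> stoich_subspace R" if "k \<in> R" for k
    using that unfolding stoich_subspace_reaction_vec by (simp add: span_base)
  then have "c0 * norm r \<le> (\<Sum>k\<in>R. \<bar>reaction_vec k \<bullet> log_vec x\<bar>)"
    using equiv r z_perp rz by (simp add: inner_add_right)
  also have "\<dots> \<le> real (card R) * B" using small sum_bounded_above[of R] by fastforce
  finally have norm_r: "norm r \<le> real (card R) * B / c0" using c0 by (simp add: field_simps)
  have "(\<Sum>i\<in>UNIV. (x $ i - b $ i) * ln (x $ i)) = (x - b) \<bullet> log_vec x"
    unfolding inner_vec_def log_vec_def by simp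
  also have "\<dots> = (x - b) \<bullet> r" using z_perp[OF xS] rz by (simp add: inner_add_right)
  also have "\<dots> \<le> norm (x - b) * norm r" by (rule norm_cauchy_schwarz)
  also have "\<dots> \<le> (\<Sum>i\<in>UNIV. \<bar>x $ i - b $ i\<bar>) * (real (card R) * B / c0)"
    using norm_r norm_le_l1_cart[of "x - b"] by (intro mult_mono) auto
  finally show ?thesis by (simp add: mult.commute)
qed

lemma norm_le_card_mul_coordinate_bound:
  fixes x :: "real ^ 'n::finite"
  assumes "\<forall>i. 0 \<le> x $ i \<and> x $ i \<le> X"
  shows "norm x \<le> real CARD('n) * X"
proof -
  have "norm x \<le> (\<Sum>i\<in>UNIV. \<bar>x $ i\<bar>)" by (rule norm_le_l1_cart)
  also have "\<dots> \<le> (\<Sum>i\<in>(UNIV::'n set). X)" using assms by (intro sum_mono) auto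
  finally show ?thesis by simp
qed

lemma log_monomial_lower_bound:
  fixes x :: "real ^ 'n::finite"
  assumes d: "\<delta> > 0" and xd: "\<forall>i. x $ i \<ge> \<delta>"
  shows "(\<Sum>i\<in>UNIV. real (y $ i) * min (ln \<delta>) 0) \<le> log_monomial x y"
proof -
  have "ln \<delta> \<le> ln (x $ i)" for i using xd[rule_format, of i] d by simp
  then have "real (y $ i) * min (ln \<delta>) 0 \<le> real (y $ i) * ln (x $ i)" for i
    by (intro mult_left_mono) (auto simp: min_le_iff_disj)
  then show ?thesis
    unfolding log_monomial_def cvec_def log_vec_def inner_vec_def by (simp add: sum_mono)
qed

lemma entropy_dissipation_far_away:
  fixes b :: "real ^ 'n::finite"
  assumes net: "reaction_network C R"
    and strong: "\<forall>y\<in>C. \<forall>y'\<in>C. (y, y') \<in> R\<^sup>*"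
    and kin: "bounded_kinetics R \<kappa> \<eta>" and d: "\<delta> > 0"
  shows "\<exists>R0 c. c > 0 \<and> (\<forall>x t. x - b \<in> stoich_subspace R \<and> (\<forall>i. x $ i \<ge> \<delta>) \<and> norm x > R0 \<and> t \<ge> 0
            \<longrightarrow> log_vec x \<bullet> mass_action_field R \<kappa> t x \<le> - c)"
proof -
  have fin: "finite C" and finR: "finite R" and "\<forall>i. \<exists>y\<in>C. y $ i > 0"
    using net unfolding reaction_network_def by auto
  then obtain y0 where y0: "y0 \<in> C" by blast
  have eta: "\<eta> > 0" using kin unfolding bounded_kinetics_def by simp
  define B where "B = gap_scale ((real (card R) / \<eta> + 1) / \<eta>) (card C)"
  have B0: "B \<ge> 0" unfolding B_def using eta by (intro gap_scale_nonneg) simp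
  obtain c0 where c0: "c0 > 0"
    and equiv: "\<forall>r\<in>stoich_subspace R. c0 * norm r \<le> (\<Sum>k\<in>R. \<bar>reaction_vec k \<bullet> r\<bar>)"
    using span_l1_norm_equivalence[OF finR, of reaction_vec]
    unfolding stoich_subspace_reaction_vec by blast
  define A where "A = real (card R) * B / c0"
  have A0: "A \<ge> 0" unfolding A_def using B0 c0 by simp
  obtain X where X: "\<forall>x. (\<forall>i. x $ i \<ge> \<delta>)
           \<and> (\<Sum>i\<in>UNIV. (x $ i - b $ i) * ln (x $ i)) \<le> A * (\<Sum>i\<in>UNIV. \<bar>x $ i - b $ i\<bar>)
           \<longrightarrow> (\<forall>i. x $ i \<le> X)"
    using log_deviation_sublevel_bounded[OF d A0, of b] by blast
  define R0 where "R0 = real CARD('n) * X"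
  define m0 where "m0 = (\<Sum>i\<in>UNIV. real (y0 $ i) * min (ln \<delta>) 0)"
  have "log_vec x \<bullet> mass_action_field R \<kappa> t x \<le> - exp m0"
    if xS: "x - b \<in> stoich_subspace R" and xd: "\<forall>i. x $ i \<ge> \<delta>" and far: "norm x > R0" and t: "t \<ge> 0"
    for x t
  proof -
    have xpos: "\<forall>i. x $ i > 0" using xd d by (meson less_le_trans)
    have "\<exists>k\<in>R. \<bar>reaction_vec k \<bullet> log_vec x\<bar> > B"
    proof (rule ccontr)
      assume "\<not> ?thesis"
      then have "\<forall>k\<in>R. \<bar>reaction_vec k \<bullet> log_vec x\<bar> \<le> B" by auto
      then have "\<forall>i. x $ i \<le> X"
        using X xd log_deviation_bounded_by_affinities[OF c0 equiv xS] unfolding A_def by blast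
      then have "norm x \<le> R0"
        unfolding R0_def using xpos by (intro norm_le_card_mul_coordinate_bound) (auto simp: less_imp_le)
      then show False using far by simp
    qed
    then obtain k where "k \<in> R" "\<bar>reaction_vec k \<bullet> log_vec x\<bar> > B" by blast
    then have "log_vec x \<bullet> mass_action_field R \<kappa> t x \<le> - exp (Max (log_monomial x ` C))"
      using large_affinity_forces_dissipation[OF net strong kin t xpos] unfolding B_def by blast
    moreover have "m0 \<le> log_monomial x y0"
      unfolding m0_def using log_monomial_lower_bound[OF d xd] .
    moreover have "log_monomial x y0 \<le> Max (log_monomial x ` C)" using fin y0 by simp
    ultimately have "exp m0 \<le> exp (Max (log_monomial x ` C))" by simp
    with \<open>log_vec x \<bullet> _ \<le> _\<close> show ?thesis by linarith
  qed
  then show ?thesis by (intro exI[of _ R0] exI[of _ "exp m0"]) auto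
qed

lemma sublevel_eventually_reached:
  fixes W :: "real \<Rightarrow> real"
  assumes lower: "\<forall>t\<ge>T0. W t \<ge> m" and c: "c > 0"
    and decay: "\<And>t0 t1. T0 \<le> t0 \<Longrightarrow> t0 \<le> t1 \<Longrightarrow> \<forall>s\<in>{t0..t1}. \<Lambda> \<le> W s
                  \<Longrightarrow> W t1 - W t0 \<le> - c * (t1 - t0)"
  shows "\<exists>ts\<ge>T0. W ts < \<Lambda>"
proof (rule ccontr)
  assume "\<not> ?thesis"
  then have above: "\<forall>s\<in>{T0..t1}. \<Lambda> \<le> W s" for t1 by (auto simp: not_less)
  define t1 where "t1 = T0 + (W T0 - m + 1) / c"
  have "T0 \<le> t1" using lower c unfolding t1_def by simp
  then have "W t1 - W T0 \<le> - c * (t1 - T0)" using decay above by blast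
  also have "\<dots> = - (W T0 - m + 1)" using c unfolding t1_def by simp
  finally have "W t1 < m" by simp
  moreover have "W t1 \<ge> m" using lower \<open>T0 \<le> t1\<close> by blast
  ultimately show False by simp
qed

(* Such a continuous function, once \<le> \<Lambda>, stays \<le> \<Lambda>: on the last excursion above \<Lambda>
   it would have to increase. *)
lemma sublevel_invariant:
  fixes W :: "real \<Rightarrow> real"
  assumes cont: "continuous_on {ts..t} W"
    and decay: "\<And>t0 t1. T0 \<le> t0 \<Longrightarrow> t0 \<le> t1 \<Longrightarrow> \<forall>s\<in>{t0..t1}. \<Lambda> \<le> W s
                  \<Longrightarrow> W t1 - W t0 \<le> - c * (t1 - t0)"
    and c: "c > 0" and ts: "T0 \<le> ts" and start: "W ts \<le> \<Lambda>" and t: "ts \<le> t"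
  shows "W t \<le> \<Lambda>"
proof (rule ccontr)
  assume "\<not> W t \<le> \<Lambda>"
  then have exceeds: "W t > \<Lambda>" by simp
  define Below where "Below = {s \<in> {ts..t}. W s \<le> \<Lambda>}"
  have "closed Below" unfolding Below_def
    by (intro continuous_on_closed_Collect_le cont continuous_on_const) auto
  moreover have "ts \<in> Below" "bdd_above Below" using start t unfolding Below_def by auto
  ultimately have s0: "Sup Below \<in> Below" using closed_contains_Sup by blast
  define s0 where "s0 = Sup Below"
  have s0_props: "ts \<le> s0" "s0 \<le> t" "W s0 \<le> \<Lambda>" using s0 unfolding s0_def Below_def by auto
  then have s0_range: "ts \<le> s0" "s0 < t" using exceeds by (auto simp: order.order_iff_strict)
  have "{s0<..t} \<subseteq> {s \<in> {s0..t}. \<Lambda> \<le> W s}"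
  proof
    fix s assume s: "s \<in> {s0<..t}"
    have "s \<notin> Below"
    proof
      assume "s \<in> Below"
      then have "s \<le> s0" unfolding s0_def using \<open>bdd_above Below\<close> by (rule cSup_upper)
      then show False using s by simp
    qed
    then show "s \<in> {s \<in> {s0..t}. \<Lambda> \<le> W s}" using s s0_range unfolding Below_def by auto
  qed
  moreover have "closed {s \<in> {s0..t}. \<Lambda> \<le> W s}"
    using continuous_on_subset[OF cont, of "{s0..t}"] s0_range
    by (intro continuous_on_closed_Collect_le continuous_on_const) auto
  ultimately have "closure {s0<..t} \<subseteq> {s \<in> {s0..t}. \<Lambda> \<le> W s}" by (rule closure_minimal)
  then have "\<forall>s\<in>{s0..t}. \<Lambda> \<le> W s" using s0_range by auto
  then have "W t - W s0 \<le> - c * (t - s0)" using decay s0_range ts by simp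
  moreover have "c * (t - s0) > 0" using c s0_range by simp
  ultimately show False using exceeds s0_props by linarith
qed

lemma entropy_decays_along_far_trajectory:
  fixes y :: "real \<Rightarrow> real ^ 'n::finite"
  assumes sol: "is_solution R \<kappa> x0 y" and finR: "finite R" and kin: "bounded_kinetics R \<kappa> \<eta>"
    and in_class: "\<forall>t\<ge>0. y t - b \<in> stoich_subspace R"
    and T0: "T0 \<ge> 0" and above_\<delta>: "\<forall>t\<ge>T0. \<forall>i. y t $ i \<ge> \<delta>" and d: "\<delta> > 0"
    and dissip: "\<forall>x t. x - b \<in> stoich_subspace R \<and> (\<forall>i. x $ i \<ge> \<delta>) \<and> norm x > R0 \<and> t \<ge> 0
                   \<longrightarrow> log_vec x \<bullet> mass_action_field R \<kappa> t x \<le> - c"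
    and t0: "T0 \<le> t0" and t01: "t0 \<le> t1" and far: "\<forall>s\<in>{t0..t1}. norm (y s) > R0"
  shows "entropy (y t1) - entropy (y t0) \<le> - c * (t1 - t0)"
proof -
  have cont: "continuous_on {t0..t1} y" using solution_continuous_on[OF sol] t0 T0 by simp
  obtain Mf where "\<forall>s\<in>{t0..t1}. norm (mass_action_field R \<kappa> s (y s)) \<le> Mf"
    using mass_action_field_bounded[OF cont t01 _ finR kin] t0 T0 by auto
  moreover have "\<forall>s\<in>{t0..t1}. \<forall>i. 0 < y s $ i"
    using above_\<delta> t0 d by (meson atLeastAtMost_iff order.trans less_le_trans)
  moreover have "\<forall>s\<in>{t0..t1}. log_vec (y s) \<bullet> mass_action_field R \<kappa> s (y s) \<le> - c"
    using dissip in_class above_\<delta> far t0 T0 by auto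
  moreover have "\<And>a b. t0 \<le> a \<Longrightarrow> a \<le> b \<Longrightarrow> b \<le> t1
                  \<Longrightarrow> ((\<lambda>s. mass_action_field R \<kappa> s (y s)) has_integral (y b - y a)) {a..b}"
    using solution_has_integral[OF sol] t0 T0 by simp
  ultimately show ?thesis using entropy_decrease[OF t01 _ cont] by blast
qed

lemma trajectory_limsup_bound:
  fixes y :: "real \<Rightarrow> real ^ 'n::finite"
  assumes sol: "is_solution R \<kappa> x0 y" and finR: "finite R" and kin: "bounded_kinetics R \<kappa> \<eta>"
    and x0_class: "x0 - b \<in> stoich_subspace R"
    and persist: "\<forall>j. ereal \<delta> < Liminf at_top (\<lambda>t. ereal (y t $ j))" and d: "\<delta> > 0"
    and c: "c > 0"
    and dissip: "\<forall>x t. x - b \<in> stoich_subspace R \<and> (\<forall>i. x $ i \<ge> \<delta>) \<and> norm x > R0 \<and> t \<ge> 0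
                   \<longrightarrow> log_vec x \<bullet> mass_action_field R \<kappa> t x \<le> - c"
  shows "Limsup at_top (\<lambda>t. ereal (y t $ i)) \<le> ereal (R0\<^sup>2 + 1 + exp 2 + real CARD('n))"
proof -
  define \<Lambda> where "\<Lambda> = R0\<^sup>2 + 1"
  have "eventually (\<lambda>t. \<forall>j. ereal \<delta> < ereal (y t $ j)) at_top"
    using persist less_LiminfD by (intro eventually_all_finite) blast
  then obtain N where "\<forall>t\<ge>N. \<forall>j. \<delta> < y t $ j" unfolding eventually_at_top_linorder by auto
  then obtain T0 where T0: "T0 \<ge> 0" and above_\<delta>: "\<forall>t\<ge>T0. \<forall>j. y t $ j \<ge> \<delta>"
    by (intro that[of "max N 0"]) (auto simp: less_imp_le)
  have pos: "\<forall>j. y t $ j > 0" if "t \<ge> T0" for t using above_\<delta> that d by (meson less_le_trans)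
  have in_class: "\<forall>t\<ge>0. y t - b \<in> stoich_subspace R"
    using solution_stays_in_class_of[OF sol x0_class] by blast
  have decay: "entropy (y t1) - entropy (y t0) \<le> - c * (t1 - t0)"
    if "T0 \<le> t0" "t0 \<le> t1" "\<forall>s\<in>{t0..t1}. \<Lambda> \<le> entropy (y s)" for t0 t1
  proof (rule entropy_decays_along_far_trajectory[OF sol finR kin in_class T0 above_\<delta> d dissip that(1,2)])
    show "\<forall>s\<in>{t0..t1}. norm (y s) > R0"
    proof
      fix s assume s: "s \<in> {t0..t1}"
      then have "\<Lambda> \<le> entropy (y s)" "entropy (y s) \<le> (norm (y s))\<^sup>2"
        using that(1,3) entropy_le_norm_sq[OF pos, of s] by auto
      then have "R0\<^sup>2 < (norm (y s))\<^sup>2" unfolding \<Lambda>_def by simp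
      then show "norm (y s) > R0" by (rule power_less_imp_less_base) simp
    qed
  qed
  have "\<forall>t\<ge>T0. entropy (y t) \<ge> - real CARD('n)" using entropy_ge pos by blast
  then obtain ts where ts: "ts \<ge> T0" "entropy (y ts) < \<Lambda>"
    using sublevel_eventually_reached[OF _ c decay] by blast
  have "y t $ i \<le> R0\<^sup>2 + 1 + exp 2 + real CARD('n)" if "t \<ge> ts" for t
  proof -
    have "continuous_on {ts..t} (\<lambda>s. entropy (y s))"
      using solution_continuous_on[OF sol] pos ts T0 by (intro entropy_continuous_on) auto
    then have "entropy (y t) \<le> \<Lambda>"
      using sublevel_invariant[OF _ decay c ts(1) _ that] ts(2) by simp
    then show ?thesis using coordinate_le_entropy[OF pos, of t i] ts that unfolding \<Lambda>_def by simp
  qed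
  then have "eventually (\<lambda>t. ereal (y t $ i) \<le> ereal (R0\<^sup>2 + 1 + exp 2 + real CARD('n))) at_top"
    unfolding eventually_at_top_linorder by auto
  then show ?thesis by (rule Limsup_bounded)
qed

(* Main theorem: the lower bound is \<delta>, and the upper bound is uniform because the constants
   R0, c come from the dissipation estimate, which depends only on the class. *)
theorem mainTheorem7:
  fixes C :: "('n::finite) complex_vec set"
    and R :: "'n reaction set"
    and \<kappa> :: "'n reaction \<Rightarrow> real \<Rightarrow> real"
    and \<eta> \<delta> :: real
    and P :: "(real ^ 'n) set"
    and \<phi> :: "real ^ 'n \<Rightarrow> real \<Rightarrow> real ^ 'n"
  assumes "reaction_network C R"
    and "weakly_reversible C R"
    and "single_linkage_class C R"
    and "bounded_kinetics R \<kappa> \<eta>"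
    and "positive_compat_class R P"
    and "\<forall>x0\<in>P. is_solution R \<kappa> x0 (\<phi> x0)"
    and "\<delta> > 0"
    and "\<forall>x0\<in>P. \<forall>i. Liminf at_top (\<lambda>t. ereal (\<phi> x0 t $ i)) > ereal \<delta>"
  shows "\<exists>\<rho>>0. \<forall>x0\<in>P. \<forall>i.
           ereal \<rho> < Liminf at_top (\<lambda>t. ereal (\<phi> x0 t $ i))
         \<and> Liminf at_top (\<lambda>t. ereal (\<phi> x0 t $ i)) \<le> Limsup at_top (\<lambda>t. ereal (\<phi> x0 t $ i))
         \<and> Limsup at_top (\<lambda>t. ereal (\<phi> x0 t $ i)) < ereal (1 / \<rho>)"
proof -
  have finR: "finite R" using assms(1) unfolding reaction_network_def by auto
  have strong: "\<forall>y\<in>C. \<forall>y'\<in>C. (y, y') \<in> R\<^sup>*"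
    using assms(2,3) unfolding weakly_reversible_def single_linkage_class_def by blast
  obtain b where P: "P = {x. x - b \<in> stoich_subspace R \<and> (\<forall>i. x $ i > 0)}"
    using assms(5) unfolding positive_compat_class_def by blast
  obtain R0 c where c: "c > 0" and dissip: "\<forall>x t. x - b \<in> stoich_subspace R \<and> (\<forall>i. x $ i \<ge> \<delta>)
      \<and> norm x > R0 \<and> t \<ge> 0 \<longrightarrow> log_vec x \<bullet> mass_action_field R \<kappa> t x \<le> - c"
    using entropy_dissipation_far_away[OF assms(1) strong assms(4,7)] by blast
  define Bnd where "Bnd = R0\<^sup>2 + 1 + exp 2 + real CARD('n)"
  define \<rho> where "\<rho> = min \<delta> (1 / (Bnd + 1))"
  have "Bnd > 0" unfolding Bnd_def by (simp add: add_pos_pos add_nonneg_pos)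
  then have \<rho>: "\<rho> > 0" "\<rho> \<le> \<delta>" "Bnd < 1 / \<rho>"
    using assms(7) unfolding \<rho>_def by (auto simp: min_def field_simps)
  show ?thesis
  proof (intro exI[of _ \<rho>] conjI \<rho>(1) ballI allI)
    fix x0 i assume x0: "x0 \<in> P"
    show "ereal \<rho> < Liminf at_top (\<lambda>t. ereal (\<phi> x0 t $ i))"
      using assms(8) x0 \<rho>(2) by (meson ereal_less_eq(3) order.strict_trans1)
    show "Liminf at_top (\<lambda>t. ereal (\<phi> x0 t $ i)) \<le> Limsup at_top (\<lambda>t. ereal (\<phi> x0 t $ i))"
      by (rule Liminf_le_Limsup) simp
    have "Limsup at_top (\<lambda>t. ereal (\<phi> x0 t $ i)) \<le> ereal Bnd"
      using trajectory_limsup_bound[OF _ finR assms(4) _ _ assms(7) c dissip] assms(6,8) x0 P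
      unfolding Bnd_def by auto
    then show "Limsup at_top (\<lambda>t. ereal (\<phi> x0 t $ i)) < ereal (1 / \<rho>)"
      using \<rho>(3) by (simp add: le_less_trans)
  qed
qed

end
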